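(* Let $X$ be a finite set of distinct points in a real Euclidean affine space, representing interacting particles, such that for each ordered pair of distinct points $x,y\in X$ the force on $x$ due to $y$ is $\varphi_{x,y}\overrightarrow{xy}$ with $\varphi_{x,y}\in\mathbb{R}$, and set $\varphi_{x,x}=-\sum_{y\neq x}\varphi_{x,y}$. The following are equivalent: (i) $X$ is an equilibrium, i.e. $\sum_{y\neq x}\varphi_{x,y}\overrightarrow{xy}=\overrightarrow{O}$ for every $x\in X$; (ii) $\sum_{z\in X}\varphi_{x,z}\left(\overrightarrow{xy}^2-\overrightarrow{yz}^2+\overrightarrow{zx}^2\right)=0$ for all $x,y\in X$; (iii) $\sum_{(z,w)\in X\times X}\varphi_{x,z}\varphi_{y,w}\,\overrightarrow{zw}^2=0$ for all $x,y\in X$.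
   Context: The square of a vector denotes its inner product with itself, so $\overrightarrow{xy}^2$ is the squared distance between $x$ and $y$. *)

theory Defs
  imports "HOL-Analysis.Analysis"
begin

definition phi_ext :: "'a set \<Rightarrow> ('a \<Rightarrow> 'a \<Rightarrow> real) \<Rightarrow> 'a \<Rightarrow> 'a \<Rightarrow> real" where
  "phi_ext X \<phi> x y = (if x = y then - (\<Sum>z\<in>X - {x}. \<phi> x z) else \<phi> x y)"

definition equilibrium :: "'a::real_inner set \<Rightarrow> ('a \<Rightarrow> 'a \<Rightarrow> real) \<Rightarrow> bool" where
  "equilibrium X \<phi> \<longleftrightarrow> (\<forall>x\<in>X. (\<Sum>y\<in>X - {x}. \<phi> x y *\<^sub>R (y - x)) = 0)"

end

theory Submission
  imports Defs
begin

text \<open>Because the extended coefficients of each row sum to zero, the force on \<open>x\<close> is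
  \<open>F x = (\<Sum>z\<in>X. phi_ext X \<phi> x z *\<^sub>R (z - x)) = (\<Sum>z\<in>X. phi_ext X \<phi> x z *\<^sub>R z)\<close>.
  By the law of cosines the sum in (ii) equals \<open>2 F x \<bullet> (y - x)\<close>; expanding the squared
  distance, the sum in (iii) equals \<open>-2 F x \<bullet> F y\<close>, the pure square terms being killed
  by the vanishing row sums. As \<open>F x\<close> is a combination of the vectors \<open>y - x\<close>, both
  conditions force \<open>F x = 0\<close>.\<close>

definition resultant_force :: "'a::real_vector set \<Rightarrow> ('a \<Rightarrow> 'a \<Rightarrow> real) \<Rightarrow> 'a \<Rightarrow> 'a" where
  "resultant_force X \<phi> x = (\<Sum>y\<in>X - {x}. \<phi> x y *\<^sub>R (y - x))"

lemma equilibrium_iff_resultant_force: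
  "equilibrium X \<phi> \<longleftrightarrow> (\<forall>x\<in>X. resultant_force X \<phi> x = 0)"
  by (simp add: equilibrium_def resultant_force_def)

lemma sum_phi_ext_eq_0:
  assumes "finite X" "x \<in> X"
  shows "(\<Sum>z\<in>X. phi_ext X \<phi> x z) = 0"
proof -
  have "(\<Sum>z\<in>X - {x}. phi_ext X \<phi> x z) = (\<Sum>z\<in>X - {x}. \<phi> x z)"
    by (rule sum.cong) (auto simp: phi_ext_def)
  then show ?thesis
    using assms by (simp add: sum.remove phi_ext_def)
qed

lemma resultant_force_eq_sum_phi_ext:
  assumes "finite X" "x \<in> X"
  shows "resultant_force X \<phi> x = (\<Sum>z\<in>X. phi_ext X \<phi> x z *\<^sub>R (z - x))"
proof -
  have "(\<Sum>z\<in>X - {x}. phi_ext X \<phi> x z *\<^sub>R (z - x)) = resultant_force X \<phi> x"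
    unfolding resultant_force_def by (rule sum.cong) (auto simp: phi_ext_def)
  then show ?thesis
    using assms by (simp add: sum.remove)
qed

lemma sum_scaleR_diff_eq_if_sum_eq_0:
  fixes x :: "'a::real_vector"
  assumes "sum c A = 0"
  shows "(\<Sum>z\<in>A. c z *\<^sub>R (z - x)) = (\<Sum>z\<in>A. c z *\<^sub>R z)"
  using assms by (simp add: scaleR_diff_right sum_subtractf flip: scaleR_sum_left)

lemma sum_weighted_law_of_cosines:
  fixes x y :: "'a::real_inner"
  shows "(\<Sum>z\<in>A. c z * ((y - x) \<bullet> (y - x) - (z - y) \<bullet> (z - y) + (x - z) \<bullet> (x - z)))
       = 2 * ((\<Sum>z\<in>A. c z *\<^sub>R (z - x)) \<bullet> (y - x))"
  unfolding inner_sum_left sum_distrib_left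
  by (rule sum.cong) (auto simp: algebra_simps inner_diff_left inner_diff_right inner_commute)

lemma sum_weighted_sq_dist_eq_inner:
  fixes p q :: "'a::real_inner \<Rightarrow> real"
  assumes "sum p X = 0" "sum q X = 0"
  shows "(\<Sum>(z, w)\<in>X \<times> X. p z * q w * ((w - z) \<bullet> (w - z)))
       = - 2 * ((\<Sum>z\<in>X. p z *\<^sub>R z) \<bullet> (\<Sum>w\<in>X. q w *\<^sub>R w))"
proof -
  have "(\<Sum>(z, w)\<in>X \<times> X. p z * q w * ((w - z) \<bullet> (w - z)))
      = (\<Sum>z\<in>X. \<Sum>w\<in>X. p z * (q w * (w \<bullet> w)) + p z * (z \<bullet> z) * q w
                         - 2 * ((p z *\<^sub>R z) \<bullet> (q w *\<^sub>R w)))"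
    unfolding sum.cartesian_product [symmetric]
    by (intro sum.cong refl) (simp add: algebra_simps inner_diff_left inner_diff_right inner_commute)
  also have "\<dots> = (\<Sum>z\<in>X. \<Sum>w\<in>X. p z * (q w * (w \<bullet> w)))
                 + (\<Sum>z\<in>X. \<Sum>w\<in>X. p z * (z \<bullet> z) * q w)
                 - 2 * (\<Sum>z\<in>X. \<Sum>w\<in>X. (p z *\<^sub>R z) \<bullet> (q w *\<^sub>R w))"
    by (simp only: sum.distrib sum_subtractf sum_distrib_left)
  also have "\<dots> = sum p X * (\<Sum>w\<in>X. q w * (w \<bullet> w)) + (\<Sum>z\<in>X. p z * (z \<bullet> z)) * sum q X
                 - 2 * ((\<Sum>z\<in>X. p z *\<^sub>R z) \<bullet> (\<Sum>w\<in>X. q w *\<^sub>R w))"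
    by (simp only: sum_product inner_sum_left) (simp only: inner_sum_right)
  finally show ?thesis
    using assms by simp
qed

lemma sum_scaleR_diff_eq_0_if_orthogonal:
  fixes x :: "'a::real_inner"
  assumes "\<forall>y\<in>A. (\<Sum>z\<in>A. c z *\<^sub>R (z - x)) \<bullet> (y - x) = 0"
  shows "(\<Sum>z\<in>A. c z *\<^sub>R (z - x)) = 0"
proof -
  let ?v = "\<Sum>z\<in>A. c z *\<^sub>R (z - x)"
  have "?v \<bullet> ?v = (\<Sum>z\<in>A. c z * (?v \<bullet> (z - x)))"
    by (simp add: inner_sum_right)
  also have "\<dots> = 0"
    using assms by simp
  finally show ?thesis
    by simp
qed

theorem corollary3p2:
  fixes X :: "'a::euclidean_space set" and \<phi> :: "'a \<Rightarrow> 'a \<Rightarrow> real"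
  assumes "finite X"
  shows "(equilibrium X \<phi>
          \<longleftrightarrow> (\<forall>x\<in>X. \<forall>y\<in>X. (\<Sum>z\<in>X. phi_ext X \<phi> x z *
                 ((y - x) \<bullet> (y - x) - (z - y) \<bullet> (z - y) + (x - z) \<bullet> (x - z))) = 0))
       \<and> (equilibrium X \<phi>
          \<longleftrightarrow> (\<forall>x\<in>X. \<forall>y\<in>X. (\<Sum>(z, w)\<in>X \<times> X. phi_ext X \<phi> x z * phi_ext X \<phi> y w *
                 ((w - z) \<bullet> (w - z))) = 0))"
proof -
  let ?F = "resultant_force X \<phi>"
  have force: "?F x = (\<Sum>z\<in>X. phi_ext X \<phi> x z *\<^sub>R (z - x))" if "x \<in> X" for x
    using resultant_force_eq_sum_phi_ext[OF assms that] .
  have force': "?F x = (\<Sum>z\<in>X. phi_ext X \<phi> x z *\<^sub>R z)" if "x \<in> X" for x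
    unfolding force[OF that]
    by (rule sum_scaleR_diff_eq_if_sum_eq_0[OF sum_phi_ext_eq_0[OF assms that]])
  have cosines: "(\<Sum>z\<in>X. phi_ext X \<phi> x z *
                 ((y - x) \<bullet> (y - x) - (z - y) \<bullet> (z - y) + (x - z) \<bullet> (x - z)))
      = 2 * (?F x \<bullet> (y - x))" if "x \<in> X" for x y
    unfolding force[OF that] by (rule sum_weighted_law_of_cosines)
  have sq_dist: "(\<Sum>(z, w)\<in>X \<times> X. phi_ext X \<phi> x z * phi_ext X \<phi> y w * ((w - z) \<bullet> (w - z)))
      = - 2 * (?F x \<bullet> ?F y)" if "x \<in> X" "y \<in> X" for x y
    unfolding force'[OF that(1)] force'[OF that(2)]
    by (intro sum_weighted_sq_dist_eq_inner sum_phi_ext_eq_0 assms that)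
  have orthogonal: "?F x = 0 \<longleftrightarrow> (\<forall>y\<in>X. ?F x \<bullet> (y - x) = 0)" if "x \<in> X" for x
    using sum_scaleR_diff_eq_0_if_orthogonal[of X _ x] by (auto simp: force[OF that])
  have "equilibrium X \<phi> \<longleftrightarrow> (\<forall>x\<in>X. \<forall>y\<in>X. ?F x \<bullet> (y - x) = 0)"
    unfolding equilibrium_iff_resultant_force using orthogonal by blast
  moreover have "equilibrium X \<phi> \<longleftrightarrow> (\<forall>x\<in>X. \<forall>y\<in>X. ?F x \<bullet> ?F y = 0)"
    unfolding equilibrium_iff_resultant_force by (metis inner_eq_zero_iff inner_zero_left)
  ultimately show ?thesis
    by (simp add: cosines sq_dist)
qed

end
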